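(* Let $C=(C_1,\dots,C_m)$ be a quantum circuit whose gates carry the distinct labels $1,\dots,m$ (gate $C_k$ has label $k$). Let $C'$ be a circuit obtained from $C$ by a finite sequence of swaps of adjacent gates whose unitaries commute, where each gate keeps its label from $C$. Let $G$ be the canonical form of $C$ and $G'$ the canonical form of $C'$, where in constructing $G'$ each vertex is labeled by the label (from $C$) of the gate it corresponds to. Then $G$ and $G'$ are the same labeled directed acyclic graph.
   Context: A gate is a unitary operation acting on a specified ordered list of qubits; we identify it with the unitary it induces on the full $n$-qubit space. Two gates $A,B$ commute if their unitaries satisfy $[A,B]=AB-BA=0$. A circuit is a finite sequence of gates $(C_1,\dots,C_m)$ (applied left to right). The canonical form of a circuit $D=(D_1,\dots,D_m)$ (each gate carrying a label) is the directed graph built as follows: start with the empty graph; for $t=1,\dots,m$: mark every vertex already in the graph as "reachable"; add a new vertex for gate $D_t$ (labeled with $D_t$'s label); then for $s=t-1,t-2,\dots,1$ in this order, if the vertex of $D_s$ is marked reachable and $[D_s,D_t]\neq 0$, add a directed edge from the vertex of $D_s$ to the vertex of $D_t$ and mark every predecessor of the vertex of $D_s$ (every vertex from which there is a directed path to it in the current graph) as not reachable. *)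

theory Defs
  imports "Jordan_Normal_Form.Schur_Decomposition"
begin

(* A gate, identified with the unitary it induces on the full n-qubit space
   (a 2^n x 2^n complex matrix). *)
definition unitary_mat :: "nat \<Rightarrow> complex mat \<Rightarrow> bool" where
  "unitary_mat N U \<longleftrightarrow> U \<in> carrier_mat N N \<and> U * mat_adjoint U = 1\<^sub>m N \<and> mat_adjoint U * U = 1\<^sub>m N"

definition is_gate :: "nat \<Rightarrow> complex mat \<Rightarrow> bool" where
  "is_gate n U \<longleftrightarrow> unitary_mat (2 ^ n) U"

definition gates_commute :: "complex mat \<Rightarrow> complex mat \<Rightarrow> bool" where
  "gates_commute A B \<longleftrightarrow> A * B - B * A = 0\<^sub>m (dim_row A) (dim_col B)"

(* A labeled circuit: list of (label, gate) pairs, applied left to right. *)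
type_synonym lcircuit = "(nat \<times> complex mat) list"

inductive comm_swap :: "lcircuit \<Rightarrow> lcircuit \<Rightarrow> bool" where
  "gates_commute (snd a) (snd b) \<Longrightarrow> comm_swap (xs @ [a, b] @ ys) (xs @ [b, a] @ ys)"

(* Canonical form construction. Vertices are positions 0..<m (vertex t is gate D_t).
   State during the inner loop: (edges, reachable-marked vertices). *)
definition canon_inner_step :: "lcircuit \<Rightarrow> nat \<Rightarrow> nat \<Rightarrow> (nat \<times> nat) set \<times> nat set
     \<Rightarrow> (nat \<times> nat) set \<times> nat set" where
  "canon_inner_step D t s st =
     (let (E, R) = st in
      if s \<in> R \<and> \<not> gates_commute (snd (D ! s)) (snd (D ! t))
      then (let E' = insert (s, t) E in (E', R - {u. (u, s) \<in> E'\<^sup>+}))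
      else (E, R))"

definition canon_outer_step :: "lcircuit \<Rightarrow> nat \<Rightarrow> (nat \<times> nat) set \<Rightarrow> (nat \<times> nat) set" where
  "canon_outer_step D t E = fst (fold (canon_inner_step D t) (rev [0..<t]) (E, {0..<t}))"

definition canon_edges :: "lcircuit \<Rightarrow> (nat \<times> nat) set" where
  "canon_edges D = fold (canon_outer_step D) [0..<length D] {}"

type_synonym lgraph = "nat set \<times> (nat \<Rightarrow> nat) \<times> (nat \<times> nat) set"

definition canonical_form :: "lcircuit \<Rightarrow> lgraph" where
  "canonical_form D = ({0..<length D}, (\<lambda>v. fst (D ! v)), canon_edges D)"

definition same_labeled_graph :: "lgraph \<Rightarrow> lgraph \<Rightarrow> bool" where
  "same_labeled_graph G H \<longleftrightarrow>
     (case G of (V, l, E) \<Rightarrow> case H of (V', l', E') \<Rightarrow>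
       E \<subseteq> V \<times> V \<and> E' \<subseteq> V' \<times> V' \<and>
       (\<exists>f. bij_betw f V V' \<and> (\<forall>v\<in>V. l' (f v) = l v) \<and>
            (\<forall>u\<in>V. \<forall>v\<in>V. (u, v) \<in> E \<longleftrightarrow> (f u, f v) \<in> E')))"

definition is_dag :: "lgraph \<Rightarrow> bool" where
  "is_dag G \<longleftrightarrow> (case G of (V, l, E) \<Rightarrow> E \<subseteq> V \<times> V \<and> acyclic E)"

end

theory Submission
  imports Defs
begin

text \<open>
  The algorithm computes the transitive reduction of the dependency order, in which gate \<open>s\<close>
  precedes gate \<open>t\<close> iff \<open>s < t\<close> and the two gates do not commute: while vertex \<open>t\<close> is
  processed, a vertex \<open>s\<close> is still marked reachable exactly when no later edge \<open>(s', t)\<close>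
  has \<open>s\<close> as a dependency predecessor, i.e.\ when \<open>(s, t)\<close> is not implied by transitivity.
  Swapping two adjacent commuting gates transports the dependency relation along the
  transposition of their positions, so it yields an isomorphic order and hence an isomorphic
  transitive reduction.
\<close>

definition trans_reduction :: "'a rel \<Rightarrow> 'a rel" where
  "trans_reduction r = {(x, z) \<in> r. \<nexists>y. (x, y) \<in> r\<^sup>+ \<and> (y, z) \<in> r\<^sup>+}"

lemma trans_reduction_subset: "trans_reduction r \<subseteq> r"
  by (auto simp: trans_reduction_def)

lemma trancl_trans_reduction_subset: "(trans_reduction r)\<^sup>+ \<subseteq> r\<^sup>+"
  by (rule trancl_mono_subset[OF trans_reduction_subset])

lemma trancl_increasing:
  fixes r :: "nat rel"
  assumes "r \<subseteq> {(a, b). a < b}" and "(x, y) \<in> r\<^sup>+"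
  shows "x < y"
  using assms(2) by induction (use assms(1) in auto)

lemma trancl_restrict_below:
  fixes r :: "nat rel"
  assumes inc: "r \<subseteq> {(a, b). a < b}"
  shows "(x, y) \<in> r\<^sup>+ \<Longrightarrow> y < t \<Longrightarrow> (x, y) \<in> {(a, b) \<in> r. b < t}\<^sup>+"
proof (induction rule: trancl_induct)
  case (base y)
  then show ?case by auto
next
  case (step y z)
  then have "y < t" using inc by auto
  then show ?case using step by (auto intro: trancl_into_trancl)
qed

lemma trancl_trans_reduction:
  fixes r :: "nat rel"
  assumes inc: "r \<subseteq> {(a, b). a < b}"
  shows "(trans_reduction r)\<^sup>+ = r\<^sup>+"
proof
  show "r\<^sup>+ \<subseteq> (trans_reduction r)\<^sup>+"
  proof clarify
    fix s t assume "(s, t) \<in> r\<^sup>+"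
    then show "(s, t) \<in> (trans_reduction r)\<^sup>+"
    proof (induction "t - s" arbitrary: s t rule: less_induct)
      case less
      show ?case
      proof (cases "\<exists>u. (s, u) \<in> r\<^sup>+ \<and> (u, t) \<in> r\<^sup>+")
        case True
        then obtain u where u: "(s, u) \<in> r\<^sup>+" "(u, t) \<in> r\<^sup>+" by blast
        then have "s < u" "u < t" using trancl_increasing[OF inc] by auto
        then have "(s, u) \<in> (trans_reduction r)\<^sup>+" "(u, t) \<in> (trans_reduction r)\<^sup>+"
          using less.hyps u by auto
        then show ?thesis by (rule trancl_trans)
      next
        case False
        with less.prems have "(s, t) \<in> r" by (cases rule: tranclE) auto
        with False show ?thesis by (auto simp: trans_reduction_def)
      qed
    qed
  qed
qed (rule trancl_trans_reduction_subset)

lemma indirect_path_iff_trans_reduction: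
  fixes r :: "nat rel"
  assumes inc: "r \<subseteq> {(a, b). a < b}"
  shows "(\<exists>y. (x, y) \<in> r\<^sup>+ \<and> (y, z) \<in> r\<^sup>+) \<longleftrightarrow> (\<exists>y. (y, z) \<in> trans_reduction r \<and> (x, y) \<in> r\<^sup>+)"
proof
  assume "\<exists>y. (x, y) \<in> r\<^sup>+ \<and> (y, z) \<in> r\<^sup>+"
  then obtain y where "(y, z) \<in> (trans_reduction r)\<^sup>+" and xy: "(x, y) \<in> r\<^sup>+"
    using trancl_trans_reduction[OF inc] by blast
  then show "\<exists>y. (y, z) \<in> trans_reduction r \<and> (x, y) \<in> r\<^sup>+"
  proof (cases rule: tranclE)
    case (step y')
    then have "(x, y') \<in> r\<^sup>+" using xy trancl_trans_reduction_subset by (meson subsetD trancl_trans)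
    then show ?thesis using step(2) by blast
  qed (use xy in blast)
qed (use trans_reduction_subset in blast)

lemma trancl_between_trans_reduction:
  fixes r :: "nat rel"
  assumes inc: "r \<subseteq> {(a, b). a < b}"
    and lower: "{(a, b) \<in> trans_reduction r. b < t} \<subseteq> F" and upper: "F \<subseteq> trans_reduction r"
    and "s < t"
  shows "(u, s) \<in> F\<^sup>+ \<longleftrightarrow> (u, s) \<in> r\<^sup>+"
proof
  assume "(u, s) \<in> F\<^sup>+"
  then show "(u, s) \<in> r\<^sup>+" using trancl_mono upper trancl_trans_reduction_subset by blast
next
  have inc': "trans_reduction r \<subseteq> {(a, b). a < b}" using inc trans_reduction_subset by blast
  assume "(u, s) \<in> r\<^sup>+"
  then have "(u, s) \<in> {(a, b) \<in> trans_reduction r. b < t}\<^sup>+"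
    using trancl_restrict_below[OF inc'] trancl_trans_reduction[OF inc] \<open>s < t\<close> by blast
  then show "(u, s) \<in> F\<^sup>+" using trancl_mono lower by blast
qed

lemma trancl_map_edges:
  assumes "r \<subseteq> A \<times> A" and "\<And>a b. a \<in> A \<Longrightarrow> b \<in> A \<Longrightarrow> (a, b) \<in> r \<Longrightarrow> (f a, f b) \<in> r'"
  shows "(x, y) \<in> r\<^sup>+ \<Longrightarrow> (f x, f y) \<in> r'\<^sup>+"
proof (induction rule: trancl_induct)
  case (base y)
  then show ?case using assms by blast
next
  case (step y z)
  then have "(f y, f z) \<in> r'" using assms by blast
  with step.IH show ?case by (rule trancl_into_trancl)
qed

lemma trancl_bij_betw_iso:
  assumes bij: "bij_betw f A B" and r: "r \<subseteq> A \<times> A" and r': "r' \<subseteq> B \<times> B"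
    and iso: "\<And>a b. a \<in> A \<Longrightarrow> b \<in> A \<Longrightarrow> (a, b) \<in> r \<longleftrightarrow> (f a, f b) \<in> r'"
    and "x \<in> A" "y \<in> A"
  shows "(x, y) \<in> r\<^sup>+ \<longleftrightarrow> (f x, f y) \<in> r'\<^sup>+"
proof
  assume "(x, y) \<in> r\<^sup>+"
  then show "(f x, f y) \<in> r'\<^sup>+" using trancl_map_edges[OF r] iso by blast
next
  define g where "g = inv_into A f"
  have g: "\<And>b. b \<in> B \<Longrightarrow> f (g b) = b" "\<And>b. b \<in> B \<Longrightarrow> g b \<in> A" "\<And>a. a \<in> A \<Longrightarrow> g (f a) = a"
    using bij unfolding g_def by (auto simp: bij_betw_def f_inv_into_f inv_into_into)
  have iso': "(g a, g b) \<in> r" if "a \<in> B" "b \<in> B" "(a, b) \<in> r'" for a b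
    using iso[of "g a" "g b"] g that by auto
  assume "(f x, f y) \<in> r'\<^sup>+"
  then have "(g (f x), g (f y)) \<in> r\<^sup>+" using trancl_map_edges[OF r'] iso' by blast
  then show "(x, y) \<in> r\<^sup>+" using g \<open>x \<in> A\<close> \<open>y \<in> A\<close> by simp
qed

lemma trans_reduction_bij_betw_iso:
  assumes bij: "bij_betw f A B" and r: "r \<subseteq> A \<times> A" and r': "r' \<subseteq> B \<times> B"
    and iso: "\<And>a b. a \<in> A \<Longrightarrow> b \<in> A \<Longrightarrow> (a, b) \<in> r \<longleftrightarrow> (f a, f b) \<in> r'"
    and a: "a \<in> A" and b: "b \<in> A"
  shows "(a, b) \<in> trans_reduction r \<longleftrightarrow> (f a, f b) \<in> trans_reduction r'"
proof -
  note iso_trancl = trancl_bij_betw_iso[OF bij r r' iso]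
  have "(\<exists>u. (a, u) \<in> r\<^sup>+ \<and> (u, b) \<in> r\<^sup>+) \<longleftrightarrow> (\<exists>u. (f a, u) \<in> r'\<^sup>+ \<and> (u, f b) \<in> r'\<^sup>+)"
  proof
    assume "\<exists>u. (a, u) \<in> r\<^sup>+ \<and> (u, b) \<in> r\<^sup>+"
    then obtain u where "(a, u) \<in> r\<^sup>+" "(u, b) \<in> r\<^sup>+" by blast
    moreover have "u \<in> A" using calculation(2) trancl_subset_Sigma[OF r] by blast
    ultimately show "\<exists>u. (f a, u) \<in> r'\<^sup>+ \<and> (u, f b) \<in> r'\<^sup>+" using iso_trancl a b by blast
  next
    assume "\<exists>u. (f a, u) \<in> r'\<^sup>+ \<and> (u, f b) \<in> r'\<^sup>+"
    then obtain u where u: "(f a, u) \<in> r'\<^sup>+" "(u, f b) \<in> r'\<^sup>+" by blast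
    then have "u \<in> B" using trancl_subset_Sigma[OF r'] by blast
    then obtain v where "v \<in> A" "u = f v" using bij by (auto simp: bij_betw_def)
    then show "\<exists>u. (a, u) \<in> r\<^sup>+ \<and> (u, b) \<in> r\<^sup>+" using u iso_trancl a b by blast
  qed
  then show ?thesis unfolding trans_reduction_def using iso a b by auto
qed

definition dependency :: "lcircuit \<Rightarrow> nat rel" where
  "dependency D = {(s, t). s < t \<and> t < length D \<and> \<not> gates_commute (snd (D ! s)) (snd (D ! t))}"

lemma dependency_increasing: "dependency D \<subseteq> {(a, b). a < b}"
  by (auto simp: dependency_def)

lemma dependency_subset: "dependency D \<subseteq> {0..<length D} \<times> {0..<length D}"
  by (auto simp: dependency_def)

text \<open>
  The state of the inner loop of step \<open>t\<close> after the vertices \<open>t - 1, \<dots>, k\<close> have been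
  processed.
\<close>

definition inner_loop_edges :: "lcircuit \<Rightarrow> nat \<Rightarrow> nat \<Rightarrow> nat rel" where
  "inner_loop_edges D t k = {(a, b) \<in> trans_reduction (dependency D). b < t \<or> b = t \<and> k \<le> a}"

definition inner_loop_marked :: "lcircuit \<Rightarrow> nat \<Rightarrow> nat \<Rightarrow> nat set" where
  "inner_loop_marked D t k = {0..<t} -
     {u. \<exists>s \<ge> k. (s, t) \<in> trans_reduction (dependency D) \<and> (u, s) \<in> (dependency D)\<^sup>+}"

lemma ex_ge_Suc_iff: "(\<exists>s \<ge> k. Q s) \<longleftrightarrow> Q k \<or> (\<exists>s \<ge> Suc k. Q s)"
proof
  assume "\<exists>s \<ge> k. Q s"
  then obtain s where "k \<le> s" "Q s" by blast
  then show "Q k \<or> (\<exists>s \<ge> Suc k. Q s)" by (cases "s = k") (auto simp: Suc_le_eq)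
qed (auto dest: Suc_leD)

lemma inner_loop_edges_Suc:
  "inner_loop_edges D t k = inner_loop_edges D t (Suc k) \<union> {(k, t)} \<inter> trans_reduction (dependency D)"
  by (auto simp: inner_loop_edges_def)

lemma inner_loop_marked_Suc:
  "inner_loop_marked D t k = inner_loop_marked D t (Suc k) -
     {u. (k, t) \<in> trans_reduction (dependency D) \<and> (u, k) \<in> (dependency D)\<^sup>+}"
  unfolding inner_loop_marked_def by (subst ex_ge_Suc_iff) blast

lemma canon_inner_step_invariant:
  assumes "k < t" "t < length D"
  shows "canon_inner_step D t k (inner_loop_edges D t (Suc k), inner_loop_marked D t (Suc k))
       = (inner_loop_edges D t k, inner_loop_marked D t k)"
proof -
  let ?P = "(dependency D)\<^sup>+" and ?H = "trans_reduction (dependency D)"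
  have H_dep: "?H \<subseteq> dependency D" by (rule trans_reduction_subset)
  show ?thesis
  proof (cases "(k, t) \<in> ?H")
    case True
    let ?E = "insert (k, t) (inner_loop_edges D t (Suc k))"
    have "k \<in> inner_loop_marked D t (Suc k)"
    proof -
      have no_path: "\<nexists>s. (k, s) \<in> ?P \<and> (s, t) \<in> ?P"
        using True by (simp add: trans_reduction_def)
      have "(s, t) \<notin> ?H" if "(k, s) \<in> ?P" for s
        by (meson no_path that H_dep r_into_trancl' subsetD)
      then show ?thesis using \<open>k < t\<close> unfolding inner_loop_marked_def by auto
    qed
    moreover have "\<not> gates_commute (snd (D ! k)) (snd (D ! t))"
      using True H_dep by (auto simp: dependency_def)
    moreover have E: "?E = inner_loop_edges D t k"
      using True by (auto simp: inner_loop_edges_Suc[of D t k])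
    moreover have "{u. (u, k) \<in> ?E\<^sup>+} = {u. (u, k) \<in> ?P}"
    proof -
      have "{(a, b) \<in> ?H. b < t} \<subseteq> ?E" "?E \<subseteq> ?H"
        unfolding E by (auto simp: inner_loop_edges_def)
      from trancl_between_trans_reduction[OF dependency_increasing this \<open>k < t\<close>]
      show ?thesis by simp
    qed
    ultimately show ?thesis
      using True by (simp add: canon_inner_step_def Let_def inner_loop_marked_Suc[of D t k])
  next
    case False
    have "\<not> (k \<in> inner_loop_marked D t (Suc k) \<and> \<not> gates_commute (snd (D ! k)) (snd (D ! t)))"
    proof
      assume marked: "k \<in> inner_loop_marked D t (Suc k) \<and> \<not> gates_commute (snd (D ! k)) (snd (D ! t))"
      then have "(k, t) \<in> dependency D" using assms by (auto simp: dependency_def)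
      with False have "\<exists>s. (k, s) \<in> ?P \<and> (s, t) \<in> ?P"
        by (simp add: trans_reduction_def)
      then obtain s where "(s, t) \<in> ?H" "(k, s) \<in> ?P"
        using indirect_path_iff_trans_reduction[OF dependency_increasing] by blast
      moreover from this have "Suc k \<le> s"
        using trancl_increasing[OF dependency_increasing] by (simp add: Suc_le_eq)
      ultimately show False using marked by (auto simp: inner_loop_marked_def)
    qed
    then show ?thesis
      using False by (auto simp: canon_inner_step_def inner_loop_edges_Suc[of D t k]
          inner_loop_marked_Suc[of D t k])
  qed
qed

lemma canon_inner_loop:
  assumes "k \<le> t" "t < length D"
  shows "foldr (canon_inner_step D t) [k..<t] (inner_loop_edges D t t, inner_loop_marked D t t)
       = (inner_loop_edges D t k, inner_loop_marked D t k)"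
  using assms(1)
proof (induction k rule: inc_induct)
  case (step k)
  then show ?case using canon_inner_step_invariant[OF step.hyps(2) assms(2)] by (simp add: upt_rec)
qed simp

lemma canon_outer_loop:
  assumes "t \<le> length D"
  shows "fold (canon_outer_step D) [0..<t] {} = {(a, b) \<in> trans_reduction (dependency D). b < t}"
  using assms
proof (induction t)
  case (Suc t)
  have H_inc: "trans_reduction (dependency D) \<subseteq> {(a, b). a < b}"
    using trans_reduction_subset dependency_increasing by blast
  have "inner_loop_edges D t t = {(a, b) \<in> trans_reduction (dependency D). b < t}"
    using H_inc by (auto simp: inner_loop_edges_def)
  moreover have "inner_loop_marked D t t = {0..<t}"
    using H_inc by (fastforce simp: inner_loop_marked_def)
  moreover have "inner_loop_edges D t 0 = {(a, b) \<in> trans_reduction (dependency D). b < Suc t}"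
    by (auto simp: inner_loop_edges_def)
  ultimately show ?case
    using Suc canon_inner_loop[where k = 0 and t = t and D = D]
    by (simp add: canon_outer_step_def foldr_conv_fold[symmetric])
qed simp

lemma canon_edges_eq_trans_reduction: "canon_edges D = trans_reduction (dependency D)"
  using canon_outer_loop[of "length D" D] trans_reduction_subset[of "dependency D"]
  by (auto simp: canon_edges_def dependency_def)

lemma is_dag_canonical_form: "is_dag (canonical_form D)"
proof -
  have H_dep: "trans_reduction (dependency D) \<subseteq> dependency D" by (rule trans_reduction_subset)
  then have "acyclic (trans_reduction (dependency D))"
    unfolding acyclic_def using trancl_increasing[of "trans_reduction (dependency D)"]
      dependency_increasing by blast
  then show ?thesis using H_dep dependency_subset
    by (auto simp: is_dag_def canonical_form_def canon_edges_eq_trans_reduction)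
qed

lemma gates_commute_sym:
  assumes A: "A \<in> carrier_mat N N" and B: "B \<in> carrier_mat N N" and "gates_commute A B"
  shows "gates_commute B A"
proof -
  have AB: "A * B - B * A = 0\<^sub>m N N" using assms by (simp add: gates_commute_def)
  have "B * A - A * B = 0\<^sub>m N N"
  proof (rule eq_matI)
    fix i j assume "i < dim_row (0\<^sub>m N N :: complex mat)" "j < dim_col (0\<^sub>m N N :: complex mat)"
    moreover from this have "(A * B - B * A) $$ (i, j) = 0" using AB by simp
    ultimately show "(B * A - A * B) $$ (i, j) = 0\<^sub>m N N $$ (i, j)" using A B by simp
  qed (use A B in auto)
  then show ?thesis using A B by (simp add: gates_commute_def)
qed

definition dependency_iso :: "(nat \<Rightarrow> nat) \<Rightarrow> lcircuit \<Rightarrow> lcircuit \<Rightarrow> bool" where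
  "dependency_iso f D D' \<longleftrightarrow> bij_betw f {0..<length D} {0..<length D'}
     \<and> (\<forall>k < length D. D' ! f k = D ! k)
     \<and> (\<forall>a < length D. \<forall>b < length D. (a, b) \<in> dependency D \<longleftrightarrow> (f a, f b) \<in> dependency D')"

lemma dependency_iso_id: "dependency_iso id D D"
  by (simp add: dependency_iso_def)

lemma dependency_iso_comp:
  assumes f: "dependency_iso f D1 D2" and g: "dependency_iso g D2 D3"
  shows "dependency_iso (g \<circ> f) D1 D3"
proof -
  have "\<And>k. k < length D1 \<Longrightarrow> f k < length D2"
    using f by (auto simp: dependency_iso_def bij_betw_def)
  then show ?thesis
    using f g by (auto simp: dependency_iso_def intro: bij_betw_trans)
qed

lemma comm_swap_set_eq: "comm_swap D D' \<Longrightarrow> set D' = set D"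
  by (induction rule: comm_swap.induct) auto

lemma comm_swap_dependency_iso:
  assumes swap: "comm_swap D D'" and square: "\<forall>x \<in> set D. snd x \<in> carrier_mat N N"
  shows "\<exists>f. dependency_iso f D D'"
  using swap
proof cases
  case (1 a b xs ys)
  define \<tau> where "\<tau> = Transposition.transpose (length xs) (Suc (length xs))"
  have len: "length D' = length D" "length D = Suc (Suc (length xs + length ys))"
    using 1 by auto
  have bij: "bij_betw \<tau> {0..<length D} {0..<length D'}"
    unfolding \<tau>_def len(1) by (rule bij_betw_transpose_iff) (simp add: len(2))
  have nth: "D' ! \<tau> k = D ! k" if "k < length D" for k
  proof -
    consider "k < length xs" | "k = length xs" | "k = Suc (length xs)" | "Suc (length xs) < k"
      by linarith
    then show ?thesis using 1 that by cases (auto simp: \<tau>_def nth_append)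
  qed
  have "gates_commute (snd a) (snd b)" "gates_commute (snd b) (snd a)"
    using 1 square gates_commute_sym[of "snd a" N "snd b"] by auto
  moreover have "D ! length xs = a" "D ! Suc (length xs) = b"
    using 1 by (auto simp: nth_append)
  ultimately have dep: "(x, y) \<in> dependency D \<longleftrightarrow> (\<tau> x, \<tau> y) \<in> dependency D'"
    if "x < length D" "y < length D" for x y
    using that nth[of x] nth[of y] bij_betwE[OF bij]
    by (auto simp: dependency_def \<tau>_def transpose_def len(1) split: if_splits)
  show ?thesis
    using bij nth dep unfolding dependency_iso_def by blast
qed

lemma comm_swaps_dependency_iso:
  assumes "comm_swap\<^sup>*\<^sup>* D D'" and "\<forall>x \<in> set D. snd x \<in> carrier_mat N N"
  shows "\<exists>f. dependency_iso f D D'"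
  using assms(1)
proof (induction rule: rtranclp_induct)
  case base
  show ?case using dependency_iso_id by blast
next
  case (step D1 D2)
  have "set D1 = set D"
    using step.hyps(1) by (induction rule: rtranclp_induct) (auto simp: comm_swap_set_eq)
  then obtain g where "dependency_iso g D1 D2"
    using comm_swap_dependency_iso[OF step.hyps(2)] assms(2) by metis
  with step.IH show ?case using dependency_iso_comp by blast
qed

lemma same_labeled_graph_canonical_form:
  assumes "dependency_iso f D D'"
  shows "same_labeled_graph (canonical_form D) (canonical_form D')"
proof -
  have bij: "bij_betw f {0..<length D} {0..<length D'}"
    and nth: "\<forall>k < length D. D' ! f k = D ! k"
    and iso: "\<And>a b. a \<in> {0..<length D} \<Longrightarrow> b \<in> {0..<length D} \<Longrightarrow>
                (a, b) \<in> dependency D \<longleftrightarrow> (f a, f b) \<in> dependency D'"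
    using assms by (auto simp: dependency_iso_def)
  have sub: "trans_reduction (dependency E) \<subseteq> {0..<length E} \<times> {0..<length E}" for E
    using trans_reduction_subset dependency_subset by blast
  show ?thesis
    unfolding same_labeled_graph_def canonical_form_def canon_edges_eq_trans_reduction
    using sub bij nth trans_reduction_bij_betw_iso[OF bij dependency_subset dependency_subset iso]
    by auto
qed

theorem mainTheorem1:
  fixes n :: nat and Cs :: "complex mat list" and C' :: lcircuit
  assumes gates: "\<forall>U \<in> set Cs. is_gate n U"
    and swaps: "comm_swap\<^sup>*\<^sup>* (zip [1..<length Cs + 1] Cs) C'"
  shows "is_dag (canonical_form (zip [1..<length Cs + 1] Cs))
       \<and> is_dag (canonical_form C')
       \<and> same_labeled_graph (canonical_form (zip [1..<length Cs + 1] Cs)) (canonical_form C')"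
proof -
  have "\<forall>x \<in> set (zip [1..<length Cs + 1] Cs). snd x \<in> carrier_mat (2 ^ n) (2 ^ n)"
    using gates by (auto simp: is_gate_def unitary_mat_def dest: set_zip_rightD)
  then obtain f where "dependency_iso f (zip [1..<length Cs + 1] Cs) C'"
    using comm_swaps_dependency_iso[OF swaps] by blast
  then show ?thesis
    using is_dag_canonical_form same_labeled_graph_canonical_form by blast
qed

end
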